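(* Let $n\in\mathbb{N}$, let $A$ be a $2n$-adically closed integral domain, and let $p,q$ be prime ideals of $A$. Regard the localizations $A_p$ and $A_q$ as subrings of $\mathrm{Frac}(A)$. Then the join $[A_p,A_q]$ is a local ring.
   Context: All rings are commutative with $1$. A ring $R$ is $k$-adically closed if every monic polynomial of degree $k$ with coefficients in $R$ has a root in $R$. For subrings $A,B$ of a ring $K$, the join $[A,B]$ is the smallest subring of $K$ containing both $A$ and $B$ (equivalently, the set of finite sums $\sum a_ib_i$ with $a_i\in A$, $b_i\in B$). *)

theory Defs
  imports "HOL-Computational_Algebra.Polynomial"
begin

text \<open>Rings are modelled as subrings of an ambient field of type 'a.
  A subring of a field is automatically an integral domain.\<close>

definition is_subring :: "'a::field set \<Rightarrow> bool" where
  "is_subring R \<longleftrightarrow> 0 \<in> R \<and> 1 \<in> R \<and>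
     (\<forall>x\<in>R. \<forall>y\<in>R. x + y \<in> R \<and> x - y \<in> R \<and> x * y \<in> R)"

definition is_ideal_of :: "'a::field set \<Rightarrow> 'a set \<Rightarrow> bool" where
  "is_ideal_of R I \<longleftrightarrow> I \<subseteq> R \<and> 0 \<in> I \<and>
     (\<forall>x\<in>I. \<forall>y\<in>I. x + y \<in> I \<and> x - y \<in> I) \<and>
     (\<forall>r\<in>R. \<forall>x\<in>I. r * x \<in> I)"

definition prime_ideal_of :: "'a::field set \<Rightarrow> 'a set \<Rightarrow> bool" where
  "prime_ideal_of R P \<longleftrightarrow> is_ideal_of R P \<and> 1 \<notin> P \<and>
     (\<forall>a\<in>R. \<forall>b\<in>R. a * b \<in> P \<longrightarrow> a \<in> P \<or> b \<in> P)"

definition maximal_ideal_of :: "'a::field set \<Rightarrow> 'a set \<Rightarrow> bool" where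
  "maximal_ideal_of R M \<longleftrightarrow> is_ideal_of R M \<and> M \<noteq> R \<and>
     (\<forall>I. is_ideal_of R I \<and> M \<subseteq> I \<longrightarrow> I = M \<or> I = R)"

definition local_subring :: "'a::field set \<Rightarrow> bool" where
  "local_subring R \<longleftrightarrow> (\<exists>!M. maximal_ideal_of R M)"

definition adically_closed :: "nat \<Rightarrow> 'a::field set \<Rightarrow> bool" where
  "adically_closed k R \<longleftrightarrow>
     (\<forall>f :: 'a poly. degree f = k \<and> lead_coeff f = 1 \<and> (\<forall>i. coeff f i \<in> R)
        \<longrightarrow> (\<exists>x\<in>R. poly f x = 0))"

definition localization :: "'a::field set \<Rightarrow> 'a set \<Rightarrow> 'a set" where
  "localization A P = {a / s | a s. a \<in> A \<and> s \<in> A \<and> s \<notin> P}"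

definition join_ring :: "'a::field set \<Rightarrow> 'a set \<Rightarrow> 'a set" where
  "join_ring A B = \<Inter>{R. is_subring R \<and> A \<subseteq> R \<and> B \<subseteq> R}"

end

theory Submission
  imports Defs
begin

(* The join R = [A_P, A_Q] is local because every element e of R satisfies:
   e or 1 - e is a unit of R.  This suffices for any subring (the non-units then
   form the unique maximal ideal).
   To prove the dichotomy, write e = E/(s t) with E, s, t in A, s not in P and
   t not in Q (every element of R has this shape, since such fractions form a
   subring containing A_P and A_Q).  Since A is 2n-adically closed it is
   2-adically closed, so X^2 - (s+t) X + E has a root x in A; with y = s + t - x
   we get  e = (x/s)(y/t)  and  1 - e = ((x-s)/s)((s-y)/t).
   A quotient u/v with u, v in A outside P \<inter> Q is a unit of R, and a short
   computation shows that one of the two pairs of numerators avoids P \<inter> Q. *)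

lemma subring_sum:
  assumes "is_subring A" "finite S" "\<forall>i\<in>S. f i \<in> A"
  shows "sum f S \<in> A"
  using assms(2,3)
proof (induction S rule: finite_induct)
  case empty then show ?case using assms(1) by (simp add: is_subring_def)
next
  case (insert x F) then show ?case using assms(1) by (simp add: is_subring_def)
qed

lemma subring_coeff_mult:
  assumes "is_subring A" "\<forall>i. coeff p i \<in> A" "\<forall>i. coeff q i \<in> A"
  shows "coeff (p * q) i \<in> A"
  unfolding coeff_mult
  by (rule subring_sum[OF assms(1)]) (use assms in \<open>auto simp: is_subring_def\<close>)

lemma subring_coeff_power:
  assumes "is_subring A" "\<forall>i. coeff p i \<in> A"
  shows "coeff (p ^ n) i \<in> A"
proof (induction n arbitrary: i)
  case 0 then show ?case using assms(1) by (simp add: is_subring_def)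
next
  case (Suc n) then show ?case using subring_coeff_mult[OF assms(1,2)] by simp
qed

(* Adic closure passes to divisors of the degree: a root of g^n is a root of g. *)
lemma adically_closed_divisor:
  assumes A: "is_subring A" and cl: "adically_closed (m * n) A"
  shows "adically_closed m A"
  unfolding adically_closed_def
proof (intro allI impI)
  fix g :: "'a poly"
  assume g: "degree g = m \<and> lead_coeff g = 1 \<and> (\<forall>i. coeff g i \<in> A)"
  then have "g \<noteq> 0" by auto
  then have "degree (g ^ n) = m * n" using g by (simp add: degree_power_eq)
  moreover have "lead_coeff (g ^ n) = 1" using g by (metis lead_coeff_power power_one)
  moreover have "\<forall>i. coeff (g ^ n) i \<in> A" using subring_coeff_power[OF A] g by blast
  ultimately obtain x where "x \<in> A" "poly (g ^ n) x = 0"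
    using cl unfolding adically_closed_def by blast
  then show "\<exists>x\<in>A. poly g x = 0" by auto
qed

lemma quadratic_root:
  assumes A: "is_subring A" and cl: "adically_closed 2 A" and "b \<in> A" "c \<in> A"
  obtains x where "x \<in> A" "x * x - b * x + c = 0"
proof -
  define g where "g = [:c, - b, 1:]"
  have "- b \<in> A" using A \<open>b \<in> A\<close> unfolding is_subring_def by (metis diff_0)
  then have "\<forall>i. coeff g i \<in> A"
    using A \<open>c \<in> A\<close> unfolding g_def is_subring_def
    by (auto simp: coeff_pCons split: nat.split)
  moreover have "degree g = 2" "lead_coeff g = 1" unfolding g_def by simp_all
  ultimately obtain x where "x \<in> A" "poly g x = 0"
    using cl unfolding adically_closed_def by blast
  then show ?thesis using that unfolding g_def by (simp add: algebra_simps)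
qed

lemma join_subring: "is_subring (join_ring X Y)"
  unfolding join_ring_def is_subring_def by auto

lemma join_upper1: "X \<subseteq> join_ring X Y"
  unfolding join_ring_def by auto

lemma join_upper2: "Y \<subseteq> join_ring X Y"
  unfolding join_ring_def by auto

lemma join_least: "is_subring T \<Longrightarrow> X \<subseteq> T \<Longrightarrow> Y \<subseteq> T \<Longrightarrow> join_ring X Y \<subseteq> T"
  unfolding join_ring_def by auto

lemma prime_idealD:
  assumes "prime_ideal_of A P"
  shows "0 \<in> P" "1 \<notin> P" "x \<in> P \<Longrightarrow> y \<in> P \<Longrightarrow> x + y \<in> P" "x \<in> P \<Longrightarrow> y \<in> P \<Longrightarrow> x - y \<in> P"
    "a \<in> A \<Longrightarrow> b \<in> A \<Longrightarrow> a * b \<in> P \<Longrightarrow> a \<in> P \<or> b \<in> P"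
  using assms unfolding prime_ideal_of_def is_ideal_of_def by blast+

(* Every element of [A_P, A_Q] is a fraction a/(s t) with s \<notin> P and t \<notin> Q,
   because these fractions already form a subring containing A_P and A_Q. *)
lemma join_localizations_fraction:
  assumes A: "is_subring A" and P: "prime_ideal_of A P" and Q: "prime_ideal_of A Q"
    and e: "e \<in> join_ring (localization A P) (localization A Q)"
  obtains a s t where "e = a / (s * t)" "a \<in> A" "s \<in> A" "s \<notin> P" "t \<in> A" "t \<notin> Q"
proof -
  define T where "T = {a / (s * t) | a s t. a \<in> A \<and> s \<in> A \<and> s \<notin> P \<and> t \<in> A \<and> t \<notin> Q}"
  have A0: "0 \<in> A" and A1: "1 \<in> A"
    and Aops: "\<And>x y. x \<in> A \<Longrightarrow> y \<in> A \<Longrightarrow> x + y \<in> A \<and> x - y \<in> A \<and> x * y \<in> A"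
    using A unfolding is_subring_def by auto
  note PP = prime_idealD[OF P] and QQ = prime_idealD[OF Q]
  have "x + y \<in> T \<and> x - y \<in> T \<and> x * y \<in> T" if "x \<in> T" "y \<in> T" for x y
  proof -
    obtain a s t where x: "x = a / (s * t)" "a \<in> A" "s \<in> A" "s \<notin> P" "t \<in> A" "t \<notin> Q"
      using \<open>x \<in> T\<close> T_def by auto
    obtain b s' t' where y: "y = b / (s' * t')" "b \<in> A" "s' \<in> A" "s' \<notin> P" "t' \<in> A" "t' \<notin> Q"
      using \<open>y \<in> T\<close> T_def by auto
    have nz: "s \<noteq> 0" "t \<noteq> 0" "s' \<noteq> 0" "t' \<noteq> 0" using x y PP(1) QQ(1) by auto
    have den: "s * s' \<in> A" "s * s' \<notin> P" "t * t' \<in> A" "t * t' \<notin> Q"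
      using x y Aops PP(5) QQ(5) by blast+
    have "x + y = (a * (s' * t') + b * (s * t)) / ((s * s') * (t * t'))"
      "x - y = (a * (s' * t') - b * (s * t)) / ((s * s') * (t * t'))"
      "x * y = (a * b) / ((s * s') * (t * t'))"
      using nz unfolding x(1) y(1) by (simp_all add: field_simps)
    moreover have "a * (s' * t') + b * (s * t) \<in> A" "a * (s' * t') - b * (s * t) \<in> A" "a * b \<in> A"
      using x y Aops by auto
    ultimately show ?thesis unfolding T_def using den by blast
  qed
  moreover have frac1: "a / s \<in> T" if "a \<in> A" "s \<in> A" "s \<notin> P" for a s
    unfolding T_def using that A1 QQ(2) by (intro CollectI exI[of _ a] exI[of _ s] exI[of _ 1]) simp
  moreover have "a / t \<in> T" if "a \<in> A" "t \<in> A" "t \<notin> Q" for a t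
    unfolding T_def using that A1 PP(2) by (intro CollectI exI[of _ a] exI[of _ 1] exI[of _ t]) simp
  moreover have "0 \<in> T" "1 \<in> T" using frac1[of 0 1] frac1[of 1 1] A0 A1 PP(2) by simp_all
  ultimately have "is_subring T" "localization A P \<subseteq> T" "localization A Q \<subseteq> T"
    unfolding is_subring_def localization_def by blast+
  then have "e \<in> T" using join_least e by blast
  then show ?thesis using that unfolding T_def by blast
qed

definition unit_in :: "'a::field set \<Rightarrow> 'a \<Rightarrow> bool" where
  "unit_in R z \<longleftrightarrow> z \<in> R \<and> z \<noteq> 0 \<and> inverse z \<in> R"

lemma unit_mult:
  assumes "is_subring R" "unit_in R a" "unit_in R b"
  shows "unit_in R (a * b)"
  using assms unfolding unit_in_def is_subring_def by (auto simp: inverse_mult_distrib)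

(* In a ring where e or 1 - e is always a unit, the non-units are closed under
   addition: if x + y were a unit with inverse v, then x v or y v = 1 - x v
   would be a unit, making x or y a unit. *)
lemma nonunits_add:
  assumes R: "is_subring R" and key: "\<forall>e\<in>R. unit_in R e \<or> unit_in R (1 - e)"
    and x: "x \<in> R" "\<not> unit_in R x" and y: "y \<in> R" "\<not> unit_in R y"
  shows "\<not> unit_in R (x + y)"
proof
  assume u: "unit_in R (x + y)"
  define v where "v = inverse (x + y)"
  have v: "v \<in> R" "(x + y) * v = 1" using u unfolding unit_in_def v_def by auto
  have cancel: "\<And>z. z * v * (x + y) = z" using v(2) by (simp add: ac_simps)
  have "x * v \<in> R" using x v R unfolding is_subring_def by auto
  moreover have "1 - x * v = y * v" using v(2) by (simp add: algebra_simps)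
  ultimately have "unit_in R (x * v) \<or> unit_in R (y * v)" using key by metis
  then have "unit_in R (x * v * (x + y)) \<or> unit_in R (y * v * (x + y))"
    using unit_mult[OF R] u by blast
  then show False using x y by (simp add: cancel)
qed

lemma nonunits_mult:
  assumes R: "is_subring R" and r: "r \<in> R" and z: "z \<in> R" "\<not> unit_in R z"
  shows "\<not> unit_in R (r * z)"
proof
  assume u: "unit_in R (r * z)"
  then have "r \<noteq> 0" "z \<noteq> 0" unfolding unit_in_def by auto
  then have "inverse z = r * inverse (r * z)" by (simp add: inverse_mult_distrib)
  also have "\<dots> \<in> R" using u r R unfolding unit_in_def is_subring_def by auto
  finally show False using z \<open>z \<noteq> 0\<close> unfolding unit_in_def by auto
qed

(* A proper ideal contains no unit, since a unit generates the whole ring. *)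
lemma proper_ideal_nonunits:
  assumes I: "is_ideal_of R I" "I \<noteq> R" and z: "z \<in> I"
  shows "\<not> unit_in R z"
proof
  assume u: "unit_in R z"
  then have "inverse z * z \<in> I" using z I(1) unfolding is_ideal_of_def unit_in_def by blast
  then have "1 \<in> I" using u unfolding unit_in_def by simp
  then have "R \<subseteq> I" using I(1) unfolding is_ideal_of_def by (metis mult.right_neutral subsetI)
  then show False using I unfolding is_ideal_of_def by auto
qed

(* Locality criterion: if e or 1 - e is a unit for every e, the non-units form
   an ideal containing every proper ideal, hence the unique maximal ideal. *)
lemma local_if_unit_or_one_minus_unit:
  assumes R: "is_subring R" and key: "\<forall>e\<in>R. unit_in R e \<or> unit_in R (1 - e)"
  shows "local_subring R"
proof -
  define M where "M = {z \<in> R. \<not> unit_in R z}"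
  have m1: "- 1 \<in> R" using R unfolding is_subring_def by (metis diff_0)
  have addM: "x + y \<in> M" if "x \<in> M" "y \<in> M" for x y
    using nonunits_add[OF R key] that R unfolding M_def is_subring_def by auto
  have mulM: "r * z \<in> M" if "r \<in> R" "z \<in> M" for r z
    using nonunits_mult[OF R] that R unfolding M_def is_subring_def by auto
  have subM: "x - y \<in> M" if "x \<in> M" "y \<in> M" for x y
  proof -
    have "x + (- 1) * y \<in> M" using addM mulM m1 that by blast
    then show ?thesis by simp
  qed
  have zeroM: "0 \<in> M" using R unfolding M_def is_subring_def unit_in_def by simp
  have "M \<subseteq> R" unfolding M_def by blast
  then have idM: "is_ideal_of R M"
    unfolding is_ideal_of_def by (simp add: zeroM addM subM mulM)
  have oneM: "1 \<notin> M" "1 \<in> R" using R unfolding M_def unit_in_def is_subring_def by auto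
  have proper: "I \<subseteq> M" if "is_ideal_of R I" "I \<noteq> R" for I
  proof -
    have "I \<subseteq> R" using that(1) unfolding is_ideal_of_def by blast
    then show ?thesis unfolding M_def using proper_ideal_nonunits[OF that] by blast
  qed
  have maxM: "maximal_ideal_of R M"
    unfolding maximal_ideal_of_def
  proof (intro conjI allI impI)
    fix I assume "is_ideal_of R I \<and> M \<subseteq> I"
    then show "I = M \<or> I = R" using proper by blast
  qed (use idM oneM in auto)
  show ?thesis unfolding local_subring_def
  proof (rule ex1I[of _ M])
    fix N assume N: "maximal_ideal_of R N"
    then have "N \<subseteq> M" using proper unfolding maximal_ideal_of_def by auto
    then have "M = N \<or> M = R" using N idM unfolding maximal_ideal_of_def by blast
    then show "N = M" using oneM by auto
  qed (rule maxM)
qed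

(* A quotient u/v with u, v in A outside P \<inter> Q is a unit of [A_P, A_Q]:
   u/v and v/u each lie in A_P or in A_Q. *)
lemma unit_quotient_in_join:
  assumes A: "is_subring A" and P: "prime_ideal_of A P" and Q: "prime_ideal_of A Q"
    and uv: "u \<in> A" "v \<in> A" "u \<notin> P \<inter> Q" "v \<notin> P \<inter> Q"
  shows "unit_in (join_ring (localization A P) (localization A Q)) (u / v)"
proof -
  let ?R = "join_ring (localization A P) (localization A Q)"
  have frac: "a / b \<in> ?R" if "a \<in> A" "b \<in> A" "b \<notin> P \<inter> Q" for a b
  proof -
    have "a / b \<in> localization A P \<or> a / b \<in> localization A Q"
      using that unfolding localization_def by blast
    then show ?thesis using join_upper1 join_upper2 by blast
  qed
  have "u \<noteq> 0" "v \<noteq> 0" using uv prime_idealD(1)[OF P] prime_idealD(1)[OF Q] by auto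
  then show ?thesis using frac[of u v] frac[of v u] uv unfolding unit_in_def by simp
qed

lemma unit_or_one_minus_unit_in_join:
  assumes A: "is_subring A" and cl: "adically_closed 2 A"
    and P: "prime_ideal_of A P" and Q: "prime_ideal_of A Q"
    and e: "e \<in> join_ring (localization A P) (localization A Q)"
  shows "unit_in (join_ring (localization A P) (localization A Q)) e \<or>
         unit_in (join_ring (localization A P) (localization A Q)) (1 - e)"
proof -
  let ?R = "join_ring (localization A P) (localization A Q)"
  have Aops: "\<And>x y. x \<in> A \<Longrightarrow> y \<in> A \<Longrightarrow> x + y \<in> A \<and> x - y \<in> A \<and> x * y \<in> A"
    using A unfolding is_subring_def by auto
  note PP = prime_idealD[OF P] and QQ = prime_idealD[OF Q]
  obtain E s t where e_eq: "e = E / (s * t)" and EA: "E \<in> A"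
    and s: "s \<in> A" "s \<notin> P" and t: "t \<in> A" "t \<notin> Q"
    using join_localizations_fraction[OF A P Q e] by blast
  obtain x where x: "x \<in> A" "x * x - (s + t) * x + E = 0"
    using quadratic_root[OF A cl, of "s + t" E] Aops s t EA by blast
  define y where "y = s + t - x"
  have A_elems: "y \<in> A" "x - s \<in> A" "s - y \<in> A"
    using Aops x s t unfolding y_def by auto
  have nz: "s \<noteq> 0" "t \<noteq> 0" using s t PP(1) QQ(1) by auto
  have "x * y = E" using x(2) unfolding y_def by (simp add: algebra_simps)
  then have e_split: "e = (x / s) * (y / t)"
    and e'_split: "1 - e = ((x - s) / s) * ((s - y) / t)"
    unfolding e_eq y_def using nz by (simp_all add: field_simps)
  have sPQ: "s \<notin> P \<inter> Q" and tPQ: "t \<notin> P \<inter> Q" using s t by auto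
  have unit_prod: "unit_in ?R ((a / s) * (b / t))"
    if "a \<in> A" "b \<in> A" "a \<notin> P \<inter> Q" "b \<notin> P \<inter> Q" for a b
    using unit_mult[OF join_subring] unit_quotient_in_join[OF A P Q] that s t sPQ tPQ by blast
  (* If x or y lies in P \<inter> Q, then x - s and s - y avoid P \<inter> Q, since otherwise
     s \<in> P or t = x + y - s \<in> Q. *)
  have "x - s \<notin> P" if "x \<in> P" using PP(4)[OF that, of "x - s"] s by auto
  moreover have "s - y \<notin> P" if "y \<in> P" using PP(3)[of "s - y" y] that s by auto
  moreover have "s - y \<notin> Q" if "x \<in> Q"
    using QQ(4)[OF that, of "s - y"] t unfolding y_def by (auto simp: algebra_simps)
  moreover have "x - s \<notin> Q" if "y \<in> Q"
    using QQ(3)[of "x - s" y] that t unfolding y_def by (auto simp: algebra_simps)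
  ultimately consider "x \<notin> P \<inter> Q" "y \<notin> P \<inter> Q" | "x - s \<notin> P \<inter> Q" "s - y \<notin> P \<inter> Q"
    by blast
  then show ?thesis
  proof cases
    case 1
    then show ?thesis using unit_prod[of x y] x(1) A_elems(1) e_split by simp
  next
    case 2
    then show ?thesis using unit_prod[of "x - s" "s - y"] A_elems(2,3) e'_split by simp
  qed
qed

theorem mainTheorem6:
  fixes A :: "'a::field set" and P Q :: "'a set" and n :: nat
  assumes "is_subring A"
    and "\<forall>x. \<exists>a\<in>A. \<exists>b\<in>A. b \<noteq> 0 \<and> x = a / b"
    and "adically_closed (2 * n) A"
    and "prime_ideal_of A P" and "prime_ideal_of A Q"
  shows "local_subring (join_ring (localization A P) (localization A Q))"
proof -
  have "adically_closed 2 A" using adically_closed_divisor assms(1,3) by blast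
  then show ?thesis
    using local_if_unit_or_one_minus_unit[OF join_subring]
      unit_or_one_minus_unit_in_join[OF assms(1) _ assms(4,5)] by blast
qed

end
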